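(* Let $\hat P$ be a partial $r$-differential poset of rank $n$, and let $P$ be the $r$-differential poset obtained from $\hat P$ by iterating Wagner's construction. Write $p_m$ for the rank sizes (which agree for $\hat P$ and $P$ in ranks $\le n$). (i) If $\Delta p_m\ge \Delta p_{m-j-\delta_{r,1}}$ holds for all $1\le m\le n$ and $1\le j\le m$, then $\Delta p_m\ge \Delta p_{m-j-\delta_{r,1}}$ holds in $P$ for all $m\ge1$ and $1\le j\le m$. (ii) If the cokernel of the up map $U_j:\mathbb{Z}^{p_j}\to\mathbb{Z}^{p_{j+1}}$ of $\hat P$ is free abelian for all $0\le j\le n-1$, then the cokernel of $U_m$ in $P$ is free abelian for all $m\ge 0$.
   Context: For a graded poset $Q$ with rank sets $Q_m$, the up map $U_m:\mathbb{Z}^{Q_m}\to\mathbb{Z}^{Q_{m+1}}$ sends each basis element to the sum of the elements covering it, and the down map $D_m:\mathbb{Z}^{Q_m}\to\mathbb{Z}^{Q_{m-1}}$ sends it to the sum of the elements it covers; $DU_m=D_{m+1}U_m$, $UD_m=U_{m-1}D_m$. A partial $r$-differential poset of rank $n$ is a finite graded poset of rank $n$ with a minimum element such that $DU_i-UD_i=rI$ for $i=0,1,\dots,n-1$. Wagner's construction: given such $Q$ of rank $n$, form $Q^+$ of rank $n+1$ by adding, for each $v\in Q_{n-1}$, a new element $v^*$ of rank $n+1$ covering exactly those $x\in Q_n$ that cover $v$, and then adjoining above each $x\in Q_n$ exactly $r$ new elements covering only $x$. Iterating $Q\mapsto Q^+$ indefinitely produces an $r$-differential poset (a graded poset with minimum,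 finite intervals and ranks, in which an element covering $m$ elements is covered by $m+r$, and two distinct elements covering exactly $m$ common elements are covered by exactly $m$ common elements). Here $p_m$ is the number of rank-$m$ elements, $p_k=0$ for $k<0$, $\Delta p_m=p_m-p_{m-1}$, $\delta_{r,1}$ is the Kronecker delta. *)

theory Defs
  imports "HOL-Algebra.Free_Abelian_Groups" "HOL-Algebra.Coset"
begin

text \<open>A finite graded poset with minimum is represented by its rank sets
  R m (elements of rank m) and its cover relation C (C x y: y covers x).
  The partial order is the reflexive-transitive closure of C.\<close>

definition graded_poset_rank :: "nat \<Rightarrow> (nat \<Rightarrow> 'a set) \<Rightarrow> ('a \<Rightarrow> 'a \<Rightarrow> bool) \<Rightarrow> bool" where
  "graded_poset_rank n R C \<longleftrightarrow>
     (\<forall>m. finite (R m)) \<and>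
     (\<forall>m k. m \<noteq> k \<longrightarrow> R m \<inter> R k = {}) \<and>
     (\<forall>m>n. R m = {}) \<and>
     R n \<noteq> {} \<and>
     (\<exists>z. R 0 = {z}) \<and>
     (\<forall>x y. C x y \<longrightarrow> (\<exists>m. x \<in> R m \<and> y \<in> R (Suc m))) \<and>
     (\<forall>m y. y \<in> R (Suc m) \<longrightarrow> (\<exists>x. C x y))"

text \<open>Entry (y,x) of D_{m+1} U_m and of U_{m-1} D_m (for x, y of rank m).\<close>

definition DU_entry :: "(nat \<Rightarrow> 'a set) \<Rightarrow> ('a \<Rightarrow> 'a \<Rightarrow> bool) \<Rightarrow> nat \<Rightarrow> 'a \<Rightarrow> 'a \<Rightarrow> int" where
  "DU_entry R C m y x = (\<Sum>z\<in>R (Suc m). of_bool (C x z) * of_bool (C y z))"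

definition UD_entry :: "(nat \<Rightarrow> 'a set) \<Rightarrow> ('a \<Rightarrow> 'a \<Rightarrow> bool) \<Rightarrow> nat \<Rightarrow> 'a \<Rightarrow> 'a \<Rightarrow> int" where
  "UD_entry R C m y x = (if m = 0 then 0 else (\<Sum>w\<in>R (m - 1). of_bool (C w x) * of_bool (C w y)))"

definition partial_differential_poset :: "nat \<Rightarrow> nat \<Rightarrow> (nat \<Rightarrow> 'a set) \<Rightarrow> ('a \<Rightarrow> 'a \<Rightarrow> bool) \<Rightarrow> bool" where
  "partial_differential_poset r n R C \<longleftrightarrow>
     graded_poset_rank n R C \<and>
     (\<forall>i<n. \<forall>x\<in>R i. \<forall>y\<in>R i. DU_entry R C i y x - UD_entry R C i y x = (if x = y then int r else 0))"

datatype 'a wel = Base 'a | Star "'a wel" | New "'a wel" nat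

definition wagner_step :: "nat \<Rightarrow> nat \<Rightarrow> (nat \<Rightarrow> 'a wel set) \<times> ('a wel \<Rightarrow> 'a wel \<Rightarrow> bool)
    \<Rightarrow> (nat \<Rightarrow> 'a wel set) \<times> ('a wel \<Rightarrow> 'a wel \<Rightarrow> bool)" where
  "wagner_step r n RC = (let R = fst RC; C = snd RC in
     ((\<lambda>m. if m \<le> n then R m
           else if m = Suc n then
             (if n = 0 then {} else Star ` R (n - 1)) \<union> {New x i | x i. x \<in> R n \<and> i < r}
           else {}),
      (\<lambda>x y. C x y
         \<or> (n \<noteq> 0 \<and> (\<exists>v\<in>R (n - 1). y = Star v \<and> x \<in> R n \<and> C v x))
         \<or> (\<exists>i<r. x \<in> R n \<and> y = New x i))))"

fun wagner_iter :: "nat \<Rightarrow> nat \<Rightarrow> nat \<Rightarrow> (nat \<Rightarrow> 'a wel set) \<times> ('a wel \<Rightarrow> 'a wel \<Rightarrow> bool)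
    \<Rightarrow> (nat \<Rightarrow> 'a wel set) \<times> ('a wel \<Rightarrow> 'a wel \<Rightarrow> bool)" where
  "wagner_iter r n 0 RC = RC"
| "wagner_iter r n (Suc k) RC = wagner_step r (n + k) (wagner_iter r n k RC)"

definition embed_poset :: "(nat \<Rightarrow> 'a set) \<Rightarrow> ('a \<Rightarrow> 'a \<Rightarrow> bool) \<Rightarrow> (nat \<Rightarrow> 'a wel set) \<times> ('a wel \<Rightarrow> 'a wel \<Rightarrow> bool)" where
  "embed_poset R C = ((\<lambda>m. Base ` R m), (\<lambda>x y. \<exists>a b. x = Base a \<and> y = Base b \<and> C a b))"

text \<open>The infinite r-differential poset obtained by iterating Wagner's construction
  indefinitely: the union of all iterates.\<close>

definition wagner_ranks :: "nat \<Rightarrow> nat \<Rightarrow> (nat \<Rightarrow> 'a set) \<Rightarrow> ('a \<Rightarrow> 'a \<Rightarrow> bool) \<Rightarrow> nat \<Rightarrow> 'a wel set" where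
  "wagner_ranks r n R C m = (\<Union>k. fst (wagner_iter r n k (embed_poset R C)) m)"

definition wagner_cover :: "nat \<Rightarrow> nat \<Rightarrow> (nat \<Rightarrow> 'a set) \<Rightarrow> ('a \<Rightarrow> 'a \<Rightarrow> bool) \<Rightarrow> 'a wel \<Rightarrow> 'a wel \<Rightarrow> bool" where
  "wagner_cover r n R C x y = (\<exists>k. snd (wagner_iter r n k (embed_poset R C)) x y)"

definition rank_size :: "(nat \<Rightarrow> 'a set) \<Rightarrow> int \<Rightarrow> int" where
  "rank_size R k = (if k < 0 then 0 else int (card (R (nat k))))"

definition delta_rank :: "(nat \<Rightarrow> 'a set) \<Rightarrow> int \<Rightarrow> int" where
  "delta_rank R k = rank_size R k - rank_size R (k - 1)"

definition Zvec :: "'a set \<Rightarrow> ('a \<Rightarrow> int) monoid" where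
  "Zvec A = \<lparr>carrier = {f. \<forall>x. x \<notin> A \<longrightarrow> f x = 0}, monoid.mult = (\<lambda>f g x. f x + g x), one = (\<lambda>x. 0)\<rparr>"

definition up_map :: "(nat \<Rightarrow> 'a set) \<Rightarrow> ('a \<Rightarrow> 'a \<Rightarrow> bool) \<Rightarrow> nat \<Rightarrow> ('a \<Rightarrow> int) \<Rightarrow> ('a \<Rightarrow> int)" where
  "up_map R C m f = (\<lambda>y. if y \<in> R (Suc m) then (\<Sum>x\<in>R m. of_bool (C x y) * f x) else 0)"

definition up_cokernel :: "(nat \<Rightarrow> 'a set) \<Rightarrow> ('a \<Rightarrow> 'a \<Rightarrow> bool) \<Rightarrow> nat \<Rightarrow> ('a \<Rightarrow> int) set monoid" where
  "up_cokernel R C m = Zvec (R (Suc m)) Mod (up_map R C m ` carrier (Zvec (R m)))"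

text \<open>An abelian group is free abelian if it is isomorphic to the free abelian group on
  some set of generators (countably many suffice for the finitely generated groups here).\<close>

definition free_abelian :: "('b, 'c) monoid_scheme \<Rightarrow> bool" where
  "free_abelian G \<longleftrightarrow> comm_group G \<and> (\<exists>S :: nat set. G \<cong> free_Abelian_group S)"

end

theory Submission
  imports Defs
begin

text \<open>Only the shape of Wagner's construction above rank n matters. For m \<ge> n, rank m + 1 consists of a copy v* of each v of rank m - 1 and
  r \<ge> 1 new elements over each x of rank m, each covering x alone. Hence
  p (m + 1) = p (m - 1) + r p m, so \<Delta>p m = p (m - 2) + (r - 1) p (m - 1) beyond rank n,
  which dominates \<Delta>p (m - j - \<delta>) once p is nondecreasing; monotonicity in the low
  ranks is the case j = m of the hypothesis. For the cokernels: below rank n the up maps are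
  those of the original poset up to relabelling, and from rank n on the row of U m indexed by the
  first new element over x is the unit vector at x, so eliminating these rows identifies
  coker U m with the free group on the remaining elements of rank m + 1.\<close>

lemma Zvec_carrier: "f \<in> carrier (Zvec A) \<longleftrightarrow> (\<forall>x. x \<notin> A \<longrightarrow> f x = 0)"
  by (simp add: Zvec_def)

lemma Zvec_mult [simp]: "f \<otimes>\<^bsub>Zvec A\<^esub> g = (\<lambda>x. f x + g x)"
  by (simp add: Zvec_def)

lemma Zvec_one [simp]: "\<one>\<^bsub>Zvec A\<^esub> = (\<lambda>x. 0)"
  by (simp add: Zvec_def)

lemma comm_group_Zvec: "comm_group (Zvec A)"
proof (rule comm_groupI)
  fix f assume "f \<in> carrier (Zvec A)"
  then show "\<exists>g\<in>carrier (Zvec A). g \<otimes>\<^bsub>Zvec A\<^esub> f = \<one>\<^bsub>Zvec A\<^esub>"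
    by (intro bexI[of _ "\<lambda>x. - f x"]) (auto simp: Zvec_carrier)
qed (auto simp: Zvec_carrier add.assoc add.commute)

lemma Zvec_iso_free_Abelian_group:
  assumes "finite A"
  shows "Abs_poly_mapping \<in> iso (Zvec A) (free_Abelian_group A)"
proof -
  have lookup_Abs: "Poly_Mapping.lookup (Abs_poly_mapping f) = f" if "f \<in> carrier (Zvec A)" for f
    using that assms
    by (intro lookup_Abs_poly_mapping) (auto simp: Zvec_carrier elim: finite_subset[rotated])
  have keys_Abs: "Poly_Mapping.keys (Abs_poly_mapping f) \<subseteq> A" if "f \<in> carrier (Zvec A)" for f
    using that lookup_Abs[OF that] by (auto simp: in_keys_iff Zvec_carrier)
  show ?thesis
  proof (rule isoI)
    show "Abs_poly_mapping \<in> hom (Zvec A) (free_Abelian_group A)"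
    proof (rule homI)
      fix f g assume f: "f \<in> carrier (Zvec A)" and g: "g \<in> carrier (Zvec A)"
      then have "(\<lambda>x. f x + g x) \<in> carrier (Zvec A)" by (simp add: Zvec_carrier)
      with f g show "Abs_poly_mapping (f \<otimes>\<^bsub>Zvec A\<^esub> g)
          = Abs_poly_mapping f \<otimes>\<^bsub>free_Abelian_group A\<^esub> Abs_poly_mapping g"
        by (auto intro: poly_mapping_eqI simp: lookup_Abs lookup_add)
    qed (simp add: keys_Abs)
    show "bij_betw Abs_poly_mapping (carrier (Zvec A)) (carrier (free_Abelian_group A))"
    proof (rule bij_betwI[where g = Poly_Mapping.lookup])
      show "Poly_Mapping.lookup \<in> carrier (free_Abelian_group A) \<rightarrow> carrier (Zvec A)"
        by (auto simp: Zvec_carrier simp flip: not_in_keys_iff_lookup_eq_zero)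
    qed (auto simp: keys_Abs lookup_Abs lookup_inverse in_keys_iff)
  qed
qed

lemma free_abelian_Zvec:
  assumes "finite A"
  shows "free_abelian (Zvec A)"
proof -
  have "Zvec A \<cong> free_Abelian_group A"
    using Zvec_iso_free_Abelian_group[OF assms] by (rule is_isoI)
  also have "free_Abelian_group A \<cong> free_Abelian_group {..<card A}"
    using assms by (simp add: isomorphic_free_Abelian_groups eqpoll_iff_card)
  finally show ?thesis
    unfolding free_abelian_def using comm_group_Zvec by blast
qed

lemma free_abelian_FactGroup_kernel:
  assumes G: "comm_group G" and h: "h \<in> hom G H" and onto: "h ` carrier G = carrier H"
    and H: "free_abelian H"
  shows "free_abelian (G Mod kernel G H h)"
proof -
  interpret h: group_hom G H h
    using G H h by (intro group_hom.intro group_hom_axioms.intro)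
      (auto simp: free_abelian_def comm_group_def)
  obtain S :: "nat set" where "H \<cong> free_Abelian_group S"
    using H by (auto simp: free_abelian_def)
  with h.FactGroup_iso[OF onto] have "G Mod kernel G H h \<cong> free_Abelian_group S"
    by (rule iso_trans)
  moreover have "comm_group (G Mod kernel G H h)"
    using comm_group.abelian_FactGroup[OF G h.subgroup_kernel] .
  ultimately show ?thesis
    unfolding free_abelian_def by blast
qed

lemma free_abelian_FactGroup_iso:
  assumes G: "comm_group G" and H: "comm_group H" and \<phi>: "\<phi> \<in> iso G H"
    and K: "subgroup K G" and L: "\<phi> ` K = L" and free: "free_abelian (H Mod L)"
  shows "free_abelian (G Mod K)"
proof -
  interpret G: comm_group G by (rule G)
  interpret H: comm_group H by (rule H)
  interpret \<phi>: group_hom G H \<phi>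
    using \<phi> by (intro group_hom.intro group_hom_axioms.intro) (auto simp: iso_def)
  have L_sub: "subgroup L H"
    using \<phi>.subgroup_img_is_subgroup[OF K] unfolding L .
  then interpret L: normal L H
    by (rule H.subgroup_imp_normal)
  define h where "h x = L #>\<^bsub>H\<^esub> \<phi> x" for x
  have h: "h \<in> hom G (H Mod L)"
    unfolding h_def using hom_compose[OF \<phi>.homh L.r_coset_hom_Mod] by (simp add: comp_def)
  have "h ` carrier G = (#>\<^bsub>H\<^esub>) L ` \<phi> ` carrier G"
    by (auto simp: h_def)
  also have "\<dots> = carrier (H Mod L)"
    using \<phi> by (auto simp: iso_def bij_betw_def FactGroup_def RCOSETS_def)
  finally have onto: "h ` carrier G = carrier (H Mod L)" .
  have "h x = \<one>\<^bsub>H Mod L\<^esub> \<longleftrightarrow> x \<in> K" if x: "x \<in> carrier G" for x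
  proof -
    have "h x = \<one>\<^bsub>H Mod L\<^esub> \<longleftrightarrow> \<phi> x \<in> L"
      using H.coset_join1[OF _ _ L_sub] H.coset_join2[OF _ L_sub] x by (auto simp: h_def)
    also have "\<dots> \<longleftrightarrow> x \<in> K"
      using \<phi> x subgroup.subset[OF K] unfolding L[symmetric] iso_def bij_betw_def inj_on_def by blast
    finally show ?thesis .
  qed
  then have "kernel G (H Mod L) h = K"
    using subgroup.subset[OF K] by (auto simp: kernel_def)
  then show ?thesis
    using free_abelian_FactGroup_kernel[OF G h onto free] by simp
qed

definition matrix_map :: "'a set \<Rightarrow> 'b set \<Rightarrow> ('b \<Rightarrow> 'a \<Rightarrow> int) \<Rightarrow> ('a \<Rightarrow> int) \<Rightarrow> 'b \<Rightarrow> int" where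
  "matrix_map A B M f = (\<lambda>y. if y \<in> B then (\<Sum>x\<in>A. M y x * f x) else 0)"

lemma up_map_eq_matrix_map: "up_map R C m = matrix_map (R m) (R (Suc m)) (\<lambda>y x. of_bool (C x y))"
  by (simp add: up_map_def matrix_map_def fun_eq_iff)

lemma matrix_map_hom: "matrix_map A B M \<in> hom (Zvec A) (Zvec B)"
  by (rule homI) (auto simp: Zvec_carrier matrix_map_def distrib_left sum.distrib)

lemma subgroup_matrix_map_image: "subgroup (matrix_map A B M ` carrier (Zvec A)) (Zvec B)"
  by (metis comm_group_Zvec comm_group_def group_hom.img_is_subgroup group_hom.intro
      group_hom_axioms.intro matrix_map_hom)

text \<open>Subtracting from every non-pivot coordinate y the combination of pivot coordinates
  \<Sum>x. M y x * f (p x) is a surjection onto Z^(B - p ` A) whose kernel is the image of M.\<close>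

lemma free_abelian_cokernel_pivots:
  assumes B: "finite B" and p: "inj_on p A" "p ` A \<subseteq> B"
    and pivot: "\<And>x x'. x \<in> A \<Longrightarrow> x' \<in> A \<Longrightarrow> M (p x) x' = of_bool (x' = x)"
  shows "free_abelian (Zvec B Mod (matrix_map A B M ` carrier (Zvec A)))"
proof -
  define T where "T = B - p ` A"
  define h where "h f = (\<lambda>y. if y \<in> T then f y - (\<Sum>x\<in>A. M y x * f (p x)) else 0)" for f
  have A: "finite A"
    using p B by (meson finite_imageD finite_subset)
  have at_pivot: "matrix_map A B M g (p x) = g x" if "x \<in> A" for g x
  proof -
    have "(\<Sum>x'\<in>A. M (p x) x' * g x') = (\<Sum>x'\<in>A. if x' = x then g x' else 0)"
      using that pivot by (intro sum.cong) auto
    then show ?thesis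
      using that p A by (auto simp: matrix_map_def)
  qed
  have h: "h \<in> hom (Zvec B) (Zvec T)"
    by (rule homI) (auto simp: h_def Zvec_carrier distrib_left sum.distrib)
  have "h t = t" if "t \<in> carrier (Zvec T)" for t
    using that by (auto simp: h_def Zvec_carrier T_def intro!: sum.neutral)
  moreover have "carrier (Zvec T) \<subseteq> carrier (Zvec B)"
    by (auto simp: Zvec_carrier T_def)
  ultimately have onto: "h ` carrier (Zvec B) = carrier (Zvec T)"
    using hom_in_carrier[OF h] by (auto intro: rev_image_eqI)
  have "kernel (Zvec B) (Zvec T) h = matrix_map A B M ` carrier (Zvec A)"
  proof (intro equalityI subsetI)
    fix f assume f: "f \<in> kernel (Zvec B) (Zvec T) h"
    define g where "g x = (if x \<in> A then f (p x) else 0)" for x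
    have "matrix_map A B M g y = f y" for y
    proof -
      consider "y \<notin> B" | "y \<in> T" | x where "x \<in> A" "y = p x"
        unfolding T_def by blast
      then show ?thesis
      proof cases
        case 1 then show ?thesis using f by (simp add: kernel_def Zvec_carrier matrix_map_def)
      next
        case 2
        have "h f y = 0" using f by (simp add: kernel_def)
        with 2 show ?thesis by (auto simp: h_def matrix_map_def g_def T_def intro!: sum.cong)
      next
        case 3 then show ?thesis by (simp add: at_pivot g_def)
      qed
    qed
    moreover have "g \<in> carrier (Zvec A)" by (simp add: g_def Zvec_carrier)
    ultimately show "f \<in> matrix_map A B M ` carrier (Zvec A)"
      by (metis ext image_eqI)
  next
    fix f assume "f \<in> matrix_map A B M ` carrier (Zvec A)"
    then obtain g where g: "g \<in> carrier (Zvec A)" and f: "f = matrix_map A B M g" by blast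
    have "f (p x) = g x" if "x \<in> A" for x
      using at_pivot[OF that] by (simp add: f)
    then have "h f = (\<lambda>y. 0)"
      by (auto simp: h_def f matrix_map_def T_def intro!: sum.cong)
    then show "f \<in> kernel (Zvec B) (Zvec T) h"
      using hom_in_carrier[OF matrix_map_hom g] by (simp add: kernel_def f)
  qed
  then show ?thesis
    using free_abelian_FactGroup_kernel[OF comm_group_Zvec h onto free_abelian_Zvec] B
    by (simp add: T_def)
qed

lemma Zvec_pullback_iso:
  assumes "inj \<phi>"
  shows "(\<lambda>f. f \<circ> \<phi>) \<in> iso (Zvec (\<phi> ` A)) (Zvec A)"
proof (rule isoI)
  show "(\<lambda>f. f \<circ> \<phi>) \<in> hom (Zvec (\<phi> ` A)) (Zvec A)"
    by (intro homI) (auto simp: Zvec_carrier inj_image_mem_iff[OF assms])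
  show "bij_betw (\<lambda>f. f \<circ> \<phi>) (carrier (Zvec (\<phi> ` A))) (carrier (Zvec A))"
  proof (rule bij_betwI[where g = "\<lambda>g y. if y \<in> range \<phi> then g (inv_into UNIV \<phi> y) else 0"])
    show "(\<lambda>f. f \<circ> \<phi>) \<in> carrier (Zvec (\<phi> ` A)) \<rightarrow> carrier (Zvec A)"
      by (auto simp: Zvec_carrier inj_image_mem_iff[OF assms])
    show "(\<lambda>g y. if y \<in> range \<phi> then g (inv_into UNIV \<phi> y) else 0)
        \<in> carrier (Zvec A) \<rightarrow> carrier (Zvec (\<phi> ` A))"
      using assms by (auto simp: Zvec_carrier; metis imageI)
  qed (use assms in \<open>auto simp: Zvec_carrier fun_eq_iff\<close>)
qed

lemma free_abelian_cokernel_reindex: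
  assumes \<phi>: "inj \<phi>" and M': "\<And>x y. x \<in> A \<Longrightarrow> y \<in> B \<Longrightarrow> M' (\<phi> y) (\<phi> x) = M y x"
    and free: "free_abelian (Zvec B Mod (matrix_map A B M ` carrier (Zvec A)))"
  shows "free_abelian (Zvec (\<phi> ` B) Mod (matrix_map (\<phi> ` A) (\<phi> ` B) M' ` carrier (Zvec (\<phi> ` A))))"
proof -
  have commute: "matrix_map (\<phi> ` A) (\<phi> ` B) M' g \<circ> \<phi> = matrix_map A B M (g \<circ> \<phi>)" for g
  proof
    fix y
    have "(\<Sum>x\<in>\<phi> ` A. M' (\<phi> y) x * g x) = (\<Sum>x\<in>A. M' (\<phi> y) (\<phi> x) * g (\<phi> x))"
      using \<phi> by (simp add: sum.reindex inj_on_def)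
    then show "(matrix_map (\<phi> ` A) (\<phi> ` B) M' g \<circ> \<phi>) y = matrix_map A B M (g \<circ> \<phi>) y"
      using \<phi> M' by (auto simp: matrix_map_def inj_image_mem_iff intro!: sum.cong)
  qed
  have onto: "(\<lambda>f. f \<circ> \<phi>) ` carrier (Zvec (\<phi> ` A)) = carrier (Zvec A)"
    using Zvec_pullback_iso[OF \<phi>] by (simp add: iso_def bij_betw_def)
  have "(\<lambda>f. f \<circ> \<phi>) ` matrix_map (\<phi> ` A) (\<phi> ` B) M' ` carrier (Zvec (\<phi> ` A))
      = matrix_map A B M ` (\<lambda>f. f \<circ> \<phi>) ` carrier (Zvec (\<phi> ` A))"
    unfolding image_image commute ..
  also have "\<dots> = matrix_map A B M ` carrier (Zvec A)"
    unfolding onto ..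
  finally show ?thesis
    using free_abelian_FactGroup_iso[OF comm_group_Zvec comm_group_Zvec Zvec_pullback_iso[OF \<phi>]
        subgroup_matrix_map_image _ free] by blast
qed

lemma fst_wagner_step:
  "fst (wagner_step r N X) m =
    (if m \<le> N then fst X m
     else if m = Suc N then
       (if N = 0 then {} else Star ` fst X (N - 1)) \<union> {New x i | x i. x \<in> fst X N \<and> i < r}
     else {})"
  by (simp add: wagner_step_def Let_def)

lemma snd_wagner_step:
  "snd (wagner_step r N X) x y \<longleftrightarrow>
     snd X x y
     \<or> (N \<noteq> 0 \<and> (\<exists>v\<in>fst X (N - 1). y = Star v \<and> x \<in> fst X N \<and> snd X v x))
     \<or> (\<exists>i<r. x \<in> fst X N \<and> y = New x i)"
  by (simp add: wagner_step_def Let_def)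

lemma New_set_eq_image: "{New x i | x i. x \<in> A \<and> i < r} = (\<lambda>(x, i). New x i) ` (A \<times> {..<r})"
  by auto

lemma fst_wagner_iter_stable:
  "m \<le> n + k \<Longrightarrow> fst (wagner_iter r n (k + d) X) m = fst (wagner_iter r n k X) m"
  by (induction d) (simp_all add: fst_wagner_step)

lemma fst_wagner_iter_empty:
  assumes "\<And>m. n < m \<Longrightarrow> fst X m = {}"
  shows "n + k < m \<Longrightarrow> fst (wagner_iter r n k X) m = {}"
  using assms by (induction k arbitrary: m) (auto simp: fst_wagner_step)

lemma finite_fst_wagner_iter:
  assumes "\<And>m. finite (fst X m)"
  shows "finite (fst (wagner_iter r n k X) m)"
  using assms by (induction k arbitrary: m) (simp_all add: fst_wagner_step New_set_eq_image)

lemma snd_wagner_iter_New: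
  "snd (wagner_iter r n k X) a (New x i) \<Longrightarrow> snd X a (New x i) \<or> a = x"
  by (induction k) (auto simp: snd_wagner_step)

lemma snd_wagner_iter_Base:
  "snd (wagner_iter r n k X) a (Base b) \<Longrightarrow> snd X a (Base b)"
  by (induction k) (auto simp: snd_wagner_step)

lemma wagner_cover_Base_iff: "wagner_cover r n R C (Base a) (Base b) \<longleftrightarrow> C a b"
proof
  assume "wagner_cover r n R C (Base a) (Base b)"
  then show "C a b"
    by (auto simp: wagner_cover_def embed_poset_def dest: snd_wagner_iter_Base)
next
  assume "C a b"
  then show "wagner_cover r n R C (Base a) (Base b)"
    unfolding wagner_cover_def by (intro exI[of _ 0]) (simp add: embed_poset_def)
qed

context
  fixes r n :: nat and R :: "nat \<Rightarrow> 'a set" and C :: "'a \<Rightarrow> 'a \<Rightarrow> bool"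
  assumes empty_above: "\<And>m. n < m \<Longrightarrow> R m = {}"
begin

lemma wagner_ranks_eq_iter:
  assumes "m \<le> n + k"
  shows "wagner_ranks r n R C m = fst (wagner_iter r n k (embed_poset R C)) m"
proof -
  let ?P = "\<lambda>k. fst (wagner_iter r n k (embed_poset R C)) m"
  have "?P k' \<subseteq> ?P k" for k'
  proof (cases "k \<le> k'")
    case True
    then show ?thesis
      using fst_wagner_iter_stable[OF assms, of r "k' - k" "embed_poset R C"] by simp
  next
    case False
    have "?P k' = {}" if "n + k' < m"
      using that empty_above by (intro fst_wagner_iter_empty) (simp_all add: embed_poset_def)
    moreover have "?P k = ?P k'" if "m \<le> n + k'"
      using fst_wagner_iter_stable[OF that, of r "k - k'"] False by simp
    ultimately show ?thesis by force
  qed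
  then show ?thesis
    unfolding wagner_ranks_def by blast
qed

lemma wagner_ranks_low: "m \<le> n \<Longrightarrow> wagner_ranks r n R C m = Base ` R m"
  using wagner_ranks_eq_iter[of m 0] by (simp add: embed_poset_def)

lemma wagner_ranks_Suc:
  assumes "n \<le> m"
  shows "wagner_ranks r n R C (Suc m) =
    (if m = 0 then {} else Star ` wagner_ranks r n R C (m - 1))
    \<union> {New x i | x i. x \<in> wagner_ranks r n R C m \<and> i < r}"
  using assms wagner_ranks_eq_iter[of "Suc m" "Suc (m - n)"] wagner_ranks_eq_iter[of m "m - n"]
    wagner_ranks_eq_iter[of "m - 1" "m - n"]
  by (simp add: fst_wagner_step)

lemma finite_wagner_ranks:
  assumes "\<And>m. finite (R m)"
  shows "finite (wagner_ranks r n R C m)"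
  using wagner_ranks_eq_iter[of m m] assms
  by (simp add: finite_fst_wagner_iter embed_poset_def)

lemma card_wagner_ranks_Suc:
  assumes "\<And>m. finite (R m)" and "n \<le> m"
  shows "card (wagner_ranks r n R C (Suc m)) =
    (if m = 0 then 0 else card (wagner_ranks r n R C (m - 1))) + r * card (wagner_ranks r n R C m)"
proof -
  let ?W = "wagner_ranks r n R C"
  let ?S = "if m = 0 then {} else Star ` ?W (m - 1)"
  let ?N = "(\<lambda>(x, i). New x i) ` (?W m \<times> {..<r})"
  have "card ?S = (if m = 0 then 0 else card (?W (m - 1)))"
    by (simp add: card_image inj_on_def)
  moreover have "card ?N = r * card (?W m)"
    by (subst card_image) (auto simp: inj_on_def card_cartesian_product)
  moreover have "card (?S \<union> ?N) = card ?S + card ?N"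
    using assms(1) finite_wagner_ranks by (intro card_Un_disjoint) auto
  ultimately show ?thesis
    using assms(2) by (simp add: wagner_ranks_Suc New_set_eq_image)
qed

lemma wagner_cover_New_iff:
  assumes "n \<le> m" and "x \<in> wagner_ranks r n R C m" and "i < r"
  shows "wagner_cover r n R C a (New x i) \<longleftrightarrow> a = x"
proof
  assume "wagner_cover r n R C a (New x i)"
  then show "a = x"
    by (auto simp: wagner_cover_def embed_poset_def dest: snd_wagner_iter_New)
next
  assume "a = x"
  have "x \<in> fst (wagner_iter r n (m - n) (embed_poset R C)) (n + (m - n))"
    using assms wagner_ranks_eq_iter[of m "m - n"] by simp
  then have "snd (wagner_iter r n (Suc (m - n)) (embed_poset R C)) x (New x i)"
    using assms(3) by (simp add: snd_wagner_step)
  then show "wagner_cover r n R C a (New x i)"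
    unfolding wagner_cover_def \<open>a = x\<close> by blast
qed

end

lemma int_seq_mono:
  fixes q :: "int \<Rightarrow> 'b :: preorder"
  assumes "\<And>k. q (k - 1) \<le> q k" and "a \<le> b"
  shows "q a \<le> q b"
  using \<open>a \<le> b\<close>
proof (induction b rule: int_ge_induct)
  case (step i)
  then show ?case
    using order_trans assms(1)[of "i + 1"] by simp
qed simp

lemma delta_dominance_recurrence:
  fixes q :: "int \<Rightarrow> int" and r n :: nat
  defines "d \<equiv> of_bool (r = 1) :: int"
  assumes r: "1 \<le> r" and nonneg: "\<And>k. 0 \<le> q k" and neg: "\<And>k. k < 0 \<Longrightarrow> q k = 0"
    and rec: "\<And>k. int n < k \<Longrightarrow> q k = q (k - 2) + int r * q (k - 1)"
    and low: "\<And>m j. 1 \<le> j \<Longrightarrow> j \<le> m \<Longrightarrow> m \<le> int n \<Longrightarrow>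
               q (m - j - d) - q (m - j - d - 1) \<le> q m - q (m - 1)"
    and j: "1 \<le> j" "j \<le> m"
  shows "q (m - j - d) - q (m - j - d - 1) \<le> q m - q (m - 1)"
proof -
  have "q (k - 1) \<le> q k" for k
  proof -
    consider "k \<le> 0" | "1 \<le> k" "k \<le> int n" | "int n < k"
      by linarith
    then show ?thesis
    proof cases
      case 1
      then show ?thesis using neg[of "k - 1"] nonneg[of k] by simp
    next
      case 2
      then have "q (- d) - q (- d - 1) \<le> q k - q (k - 1)"
        using low[of k k] by simp
      moreover have "q (- d - 1) = 0"
        by (rule neg) (simp add: d_def)
      ultimately show ?thesis
        using nonneg[of "- d"] by simp
    next
      case 3
      have "1 * q (k - 1) \<le> int r * q (k - 1)"
        using r nonneg[of "k - 1"] by (intro mult_right_mono) auto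
      then show ?thesis
        using rec[OF 3] nonneg[of "k - 2"] by simp
    qed
  qed
  then have mono: "a \<le> b \<Longrightarrow> q a \<le> q b" for a b
    by (rule int_seq_mono)
  show ?thesis
  proof (cases "m \<le> int n")
    case True
    then show ?thesis using low j by blast
  next
    case False
    have "q m - q (m - 1) = q (m - 2) + (int r - 1) * q (m - 1)"
      using rec[of m] False by (simp add: algebra_simps)
    moreover have "q (m - j - d) \<le> (if r = 1 then q (m - 2) else q (m - 1))"
      using j mono[of "m - j - 1" "m - 2"] mono[of "m - j" "m - 1"] by (simp add: d_def)
    moreover have "1 * q (m - 1) \<le> (int r - 1) * q (m - 1)" if "r \<noteq> 1"
      using that r nonneg[of "m - 1"] by (intro mult_right_mono) auto
    ultimately show ?thesis
      using nonneg[of "m - j - d - 1"] nonneg[of "m - 2"] by (auto split: if_splits)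
  qed
qed

lemma rank_size_wagner_ranks_low:
  assumes "\<And>m. n < m \<Longrightarrow> R m = {}" and "k \<le> int n"
  shows "rank_size (wagner_ranks r n R C) k = rank_size R k"
proof (cases "k < 0")
  case False
  then have "wagner_ranks r n R C (nat k) = Base ` R (nat k)"
    using assms by (intro wagner_ranks_low) auto
  then show ?thesis
    by (simp add: rank_size_def card_image inj_on_def)
qed (simp add: rank_size_def)

lemma rank_size_wagner_ranks_rec:
  assumes "\<And>m. finite (R m)" "\<And>m. n < m \<Longrightarrow> R m = {}" and "int n < k"
  shows "rank_size (wagner_ranks r n R C) k
    = rank_size (wagner_ranks r n R C) (k - 2) + int r * rank_size (wagner_ranks r n R C) (k - 1)"
proof -
  define m where "m = nat (k - 1)"
  have k: "k = int m + 1" and "n \<le> m"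
    using assms(3) by (auto simp: m_def)
  have "rank_size (wagner_ranks r n R C) (k - 2)
      = int (if m = 0 then 0 else card (wagner_ranks r n R C (m - 1)))"
    by (auto simp: k rank_size_def nat_diff_distrib')
  moreover have "nat k = Suc m"
    using k by simp
  ultimately show ?thesis
    using card_wagner_ranks_Suc[OF assms(2,1) \<open>n \<le> m\<close>]
    by (simp add: rank_size_def k algebra_simps)
qed

lemma delta_rank_dominance_wagner:
  assumes fin: "\<And>m. finite (R m)" and empty: "\<And>m. n < m \<Longrightarrow> R m = {}" and r: "1 \<le> r"
    and low: "\<And>m j. 1 \<le> m \<Longrightarrow> m \<le> int n \<Longrightarrow> 1 \<le> j \<Longrightarrow> j \<le> m \<Longrightarrow>
               delta_rank R (m - j - of_bool (r = 1)) \<le> delta_rank R m"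
    and j: "1 \<le> j" "j \<le> m"
  shows "delta_rank (wagner_ranks r n R C) (m - j - of_bool (r = 1))
    \<le> delta_rank (wagner_ranks r n R C) m"
proof -
  let ?W = "wagner_ranks r n R C"
  have agree: "delta_rank ?W k = delta_rank R k" if "k \<le> int n" for k
    using that rank_size_wagner_ranks_low[OF empty] by (simp add: delta_rank_def)
  show ?thesis
    unfolding delta_rank_def
  proof (rule delta_dominance_recurrence[OF r _ _ rank_size_wagner_ranks_rec[OF fin empty] _ j])
    show "rank_size ?W (m' - j' - of_bool (r = 1)) - rank_size ?W (m' - j' - of_bool (r = 1) - 1)
        \<le> rank_size ?W m' - rank_size ?W (m' - 1)"
      if "1 \<le> j'" "j' \<le> m'" "m' \<le> int n" for m' j'
      using low[of m' j'] agree[of m'] agree[of "m' - j' - of_bool (r = 1)"] that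
      by (simp add: delta_rank_def)
  qed (simp_all add: rank_size_def)
qed

lemma free_abelian_up_cokernel_wagner:
  assumes fin: "\<And>m. finite (R m)" and empty: "\<And>m. n < m \<Longrightarrow> R m = {}" and r: "1 \<le> r"
    and low: "\<And>j. j < n \<Longrightarrow> free_abelian (up_cokernel R C j)"
  shows "free_abelian (up_cokernel (wagner_ranks r n R C) (wagner_cover r n R C) m)"
proof (cases "m < n")
  case True
  have "free_abelian (Zvec (Base ` R (Suc m)) Mod
      matrix_map (Base ` R m) (Base ` R (Suc m)) (\<lambda>y x. of_bool (wagner_cover r n R C x y))
        ` carrier (Zvec (Base ` R m)))"
    using low[OF True]
    by (intro free_abelian_cokernel_reindex)
      (simp_all add: wagner_cover_Base_iff up_cokernel_def up_map_eq_matrix_map inj_on_def)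
  then show ?thesis
    using True by (simp add: up_cokernel_def up_map_eq_matrix_map wagner_ranks_low[OF empty])
next
  case False
  let ?W = "wagner_ranks r n R C"
  have "(\<lambda>x. New x 0) ` ?W m \<subseteq> ?W (Suc m)"
    using False r by (auto simp: wagner_ranks_Suc[OF empty])
  moreover have "wagner_cover r n R C x' (New x 0) \<longleftrightarrow> x' = x" if "x \<in> ?W m" for x x'
    using wagner_cover_New_iff[OF empty _ that, of 0 x'] False r by simp
  ultimately have "free_abelian (Zvec (?W (Suc m)) Mod
      matrix_map (?W m) (?W (Suc m)) (\<lambda>y x. of_bool (wagner_cover r n R C x y))
        ` carrier (Zvec (?W m)))"
    by (intro free_abelian_cokernel_pivots finite_wagner_ranks[OF empty fin])
      (auto simp: inj_on_def)
  then show ?thesis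
    by (simp add: up_cokernel_def up_map_eq_matrix_map)
qed

theorem proposition4p1:
  fixes r n :: nat and R :: "nat \<Rightarrow> 'a set" and C :: "'a \<Rightarrow> 'a \<Rightarrow> bool"
  assumes r_pos: "r \<ge> 1"
    and hatP: "partial_differential_poset r n R C"
  shows "((\<forall>m j :: int. 1 \<le> m \<and> m \<le> int n \<and> 1 \<le> j \<and> j \<le> m \<longrightarrow>
             delta_rank R m \<ge> delta_rank R (m - j - of_bool (r = 1)))
          \<longrightarrow> (\<forall>m j :: int. 1 \<le> m \<and> 1 \<le> j \<and> j \<le> m \<longrightarrow>
             delta_rank (wagner_ranks r n R C) m
               \<ge> delta_rank (wagner_ranks r n R C) (m - j - of_bool (r = 1))))
       \<and> ((\<forall>j<n. free_abelian (up_cokernel R C j))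
          \<longrightarrow> (\<forall>m. free_abelian (up_cokernel (wagner_ranks r n R C) (wagner_cover r n R C) m)))"
proof -
  have fin: "\<And>m. finite (R m)" and empty: "\<And>m. n < m \<Longrightarrow> R m = {}"
    using hatP by (auto simp: partial_differential_poset_def graded_poset_rank_def)
  show ?thesis
    using delta_rank_dominance_wagner[OF fin empty r_pos]
      free_abelian_up_cokernel_wagner[OF fin empty r_pos]
    by auto
qed

end
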